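(* Let $C$ be a real random variable satisfying \[ C \overset{d}{=} U_{(1)}\mathbf 1_{\{V<U_{(1)}\}}\,C^{(1)} + (U_{(2)}-U_{(1)})\mathbf 1_{\{U_{(1)}<V<U_{(2)}\}}\,C^{(2)} + (1-U_{(2)})\mathbf 1_{\{V>U_{(2)}\}}\,C^{(3)} + 1 + U_{(2)}\bigl(2-U_{(1)}-U_{(2)}\bigr), \] where $C^{(1)},C^{(2)},C^{(3)}$ are independent copies of $C$, independent of $(U_1,U_2,V)$. Then $C$ also satisfies \[ C \overset{d}{=} X^*\,C' + g(X^*,W^* ), \] where $C'$ is a copy of $C$ independent of $(X^*,W^*,J)$.
   Context: $U_1,U_2,V$ are independent uniform on $(0,1)$; $U_{(1)}=\min\{U_1,U_2\}$, $U_{(2)}=\max\{U_1,U_2\}$. $(X^*,W^* )$ has joint density $f(x,w)=6x$ for $0<x<w<1$ and $0$ elsewhere. $J$ is uniform on $\{1,2,3\}$ and independent of $(X^*,W^* )$; $g(X^*,W^* )=h_J(X^*,W^* )$ with $h_1(x,w)=1+w(2-x-w)$, $h_2(x,w)=1+(1+x-w)(2w-x)$, $h_3(x,w)=1+(1-x)(x+w)$. *)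

theory Defs
  imports "HOL-Probability.Probability"
begin

definition unif01 :: "real measure" where
  "unif01 = uniform_measure lborel {0<..<1}"

definition XW_law :: "(real \<times> real) measure" where
  "XW_law = density (lborel \<Otimes>\<^sub>M lborel)
     (\<lambda>(x,w). ennreal (if 0 < x \<and> x < w \<and> w < 1 then 6 * x else 0))"

definition J_law :: "nat measure" where
  "J_law = uniform_count_measure {1,2,3}"

definition h1 :: "real \<Rightarrow> real \<Rightarrow> real" where "h1 x w = 1 + w * (2 - x - w)"
definition h2 :: "real \<Rightarrow> real \<Rightarrow> real" where "h2 x w = 1 + (1 + x - w) * (2 * w - x)"
definition h3 :: "real \<Rightarrow> real \<Rightarrow> real" where "h3 x w = 1 + (1 - x) * (x + w)"

definition hJ :: "nat \<Rightarrow> real \<Rightarrow> real \<Rightarrow> real" where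
  "hJ j x w = (if j = 1 then h1 x w else if j = 2 then h2 x w else h3 x w)"

definition T1 :: "(real \<times> real \<times> real) \<times> (real \<times> real \<times> real) \<Rightarrow> real" where
  "T1 = (\<lambda>((u1,u2,v),(c1,c2,c3)).
     let a = min u1 u2; b = max u1 u2 in
       a * indicator {v'. v' < a} v * c1
     + (b - a) * indicator {v'. a < v' \<and> v' < b} v * c2
     + (1 - b) * indicator {v'. v' > b} v * c3
     + 1 + b * (2 - a - b))"

text \<open>Right-hand side map of the second equation: X* C' + g(X*,W*), g = h_J.\<close>
definition T2 :: "((real \<times> real) \<times> nat) \<times> real \<Rightarrow> real" where
  "T2 = (\<lambda>(((x,w),j),c). x * c + hJ j x w)"

end

theory Submission
  imports Defs
begin

text \<open>
  Fix a Borel set \<open>A\<close> and write \<open>\<psi>(l, g) = P(l C + g \<in> A)\<close>. Both distributional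
  identities assign to \<open>A\<close> the mass \<open>2 \<Sum>\<^sub>j \<integral>\<integral>\<^bsub>0<x<w<1\<^esub> x \<psi>(x, h\<^sub>j(x, w))\<close>.
  For \<open>X* C' + g(X*, W*)\<close> this is immediate from the density \<open>6x\<close> and \<open>P(J = j) = 1/3\<close>.
  For the first equation, integrating out the copies and \<open>V\<close> evaluates \<open>\<psi>\<close> at each of the
  three spacings into which \<open>U\<^sub>1, U\<^sub>2\<close> cut \<open>(0, 1)\<close>, weighted by the spacing's length;
  symmetrising in \<open>(U\<^sub>1, U\<^sub>2)\<close> gives twice an integral over the triangle \<open>0 < a < b < 1\<close>,
  and the measure-preserving maps \<open>(x, w) \<mapsto> (1 - w, 1 - w + x)\<close> and \<open>(x, w) \<mapsto> (1 - w, 1 - x)\<close>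
  of that triangle turn the middle and the right spacing into the branches \<open>h\<^sub>2\<close> and \<open>h\<^sub>3\<close>.
\<close>

lemma (in prob_space) nn_integral_fst_factor:
  assumes [measurable]: "f \<in> borel_measurable N"
  shows "(\<integral>\<^sup>+z. f (fst z) \<partial>(N \<Otimes>\<^sub>M M)) = integral\<^sup>N N f"
proof -
  have "(\<lambda>z. f (fst z)) \<in> borel_measurable (N \<Otimes>\<^sub>M M)"
    by measurable
  from nn_integral_fst[OF this] show ?thesis
    by (simp add: emeasure_space_1)
qed

lemma (in prob_space) nn_integral_snd_factor:
  assumes "sigma_finite_measure N" and [measurable]: "f \<in> borel_measurable N"
  shows "(\<integral>\<^sup>+z. f (snd z) \<partial>(M \<Otimes>\<^sub>M N)) = integral\<^sup>N N f"
proof -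
  interpret N: sigma_finite_measure N by fact
  have "(\<lambda>z. f (snd z)) \<in> borel_measurable (M \<Otimes>\<^sub>M N)"
    by measurable
  from N.nn_integral_fst[OF this] show ?thesis
    by (simp add: emeasure_space_1)
qed

lemma prob_space_unif01: "prob_space unif01"
  unfolding unif01_def by (rule prob_space_uniform_measure) auto

lemma sets_unif01 [measurable_cong]: "sets unif01 = sets borel"
  by (simp add: unif01_def)

lemma AE_unif01: "AE x in unif01. 0 < x \<and> x < 1"
  unfolding unif01_def by (rule AE_uniform_measureI) auto

lemma nn_integral_unif01:
  assumes "f \<in> borel_measurable borel"
  shows "(\<integral>\<^sup>+x. f x \<partial>unif01) = (\<integral>\<^sup>+x. f x * indicator {0<..<1} x \<partial>lborel)"
  unfolding unif01_def using assms
  by (subst nn_integral_uniform_measure) (auto simp: divide_ennreal_def)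

lemma prob_space_J_law: "prob_space J_law"
  unfolding J_law_def by (rule prob_space_uniform_count_measure) auto

lemma nn_integral_J_law: "(\<integral>\<^sup>+j. f j \<partial>J_law) = (f 1 + f 2 + f 3) / 3"
proof -
  have "ennreal (1 / 3) = inverse 3"
    by (metis divide_ennreal_def ennreal_1 ennreal_numeral divide_ennreal zero_le_one zero_less_numeral mult_1)
  then show ?thesis
    unfolding J_law_def uniform_count_measure_def
    by (subst nn_integral_point_measure_finite) (auto simp: divide_ennreal_def algebra_simps)
qed

lemma ennreal_six_mult_third:
  fixes s :: ennreal and x :: real
  assumes "0 \<le> x"
  shows "ennreal (6 * x) * (s / 3) = 2 * (ennreal x * s)"
proof -
  have "ennreal (6 * x) = 2 * ennreal x * 3"
    using assms by (metis ennreal_mult' ennreal_numeral mult.commute mult.left_commute mult_2_right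
        numeral_Bit0 numeral_One)
  then have "ennreal (6 * x) * (s / 3) = 2 * ennreal x * (s * 3 / 3)"
    by (simp add: ennreal_times_divide mult_ac)
  also have "\<dots> = 2 * (ennreal x * s)"
    by (simp add: mult_divide_eq_ennreal mult.assoc)
  finally show ?thesis .
qed

definition triangle_integral :: "(real \<Rightarrow> real \<Rightarrow> ennreal) \<Rightarrow> ennreal" where
  "triangle_integral K =
     (\<integral>\<^sup>+x. \<integral>\<^sup>+w. (if 0 < x \<and> x < w \<and> w < 1 then K x w else 0) \<partial>lborel \<partial>lborel)"

lemma triangle_integral_cong:
  assumes "\<And>x w. 0 < x \<Longrightarrow> x < w \<Longrightarrow> w < 1 \<Longrightarrow> K x w = L x w"
  shows "triangle_integral K = triangle_integral L"
  unfolding triangle_integral_def using assms by (intro nn_integral_cong) auto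

lemma triangle_integral_add:
  assumes [measurable]: "case_prod K \<in> borel_measurable (borel \<Otimes>\<^sub>M borel)"
    "case_prod L \<in> borel_measurable (borel \<Otimes>\<^sub>M borel)"
  shows "triangle_integral (\<lambda>x w. K x w + L x w) = triangle_integral K + triangle_integral L"
proof -
  define K' where "K' x w = (if 0 < x \<and> x < w \<and> w < 1 then K x w else 0)" for x w
  define L' where "L' x w = (if 0 < x \<and> x < w \<and> w < 1 then L x w else 0)" for x w
  have [measurable]: "case_prod K' \<in> borel_measurable (borel \<Otimes>\<^sub>M borel)"
    "case_prod L' \<in> borel_measurable (borel \<Otimes>\<^sub>M borel)"
    unfolding K'_def L'_def by measurable
  have "triangle_integral (\<lambda>x w. K x w + L x w) = (\<integral>\<^sup>+x. \<integral>\<^sup>+w. K' x w + L' x w \<partial>lborel \<partial>lborel)"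
    unfolding triangle_integral_def K'_def L'_def by (intro nn_integral_cong) simp
  also have "\<dots> = (\<integral>\<^sup>+x. (\<integral>\<^sup>+w. K' x w \<partial>lborel) + (\<integral>\<^sup>+w. L' x w \<partial>lborel) \<partial>lborel)"
    by (intro nn_integral_cong nn_integral_add) measurable
  also have "\<dots> = triangle_integral K + triangle_integral L"
    unfolding triangle_integral_def K'_def[symmetric] L'_def[symmetric]
    by (intro nn_integral_add) measurable
  finally show ?thesis .
qed

lemma triangle_integral_cmult:
  assumes [measurable]: "case_prod K \<in> borel_measurable (borel \<Otimes>\<^sub>M borel)"
  shows "triangle_integral (\<lambda>x w. c * K x w) = c * triangle_integral K"
proof -
  define K' where "K' x w = (if 0 < x \<and> x < w \<and> w < 1 then K x w else 0)" for x w
  have [measurable]: "case_prod K' \<in> borel_measurable (borel \<Otimes>\<^sub>M borel)"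
    unfolding K'_def by measurable
  have "triangle_integral (\<lambda>x w. c * K x w) = (\<integral>\<^sup>+x. \<integral>\<^sup>+w. c * K' x w \<partial>lborel \<partial>lborel)"
    unfolding triangle_integral_def K'_def by (intro nn_integral_cong) simp
  also have "\<dots> = (\<integral>\<^sup>+x. c * (\<integral>\<^sup>+w. K' x w \<partial>lborel) \<partial>lborel)"
    by (intro nn_integral_cong nn_integral_cmult) measurable
  also have "\<dots> = c * triangle_integral K"
    unfolding triangle_integral_def K'_def[symmetric] by (intro nn_integral_cmult) measurable
  finally show ?thesis .
qed

lemma triangle_integral_shear:
  assumes [measurable]: "case_prod K \<in> borel_measurable (borel \<Otimes>\<^sub>M borel)"
  shows "triangle_integral K = triangle_integral (\<lambda>x w. K (1 - w) (1 - w + x))"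
proof -
  define K' where "K' a b = (if 0 < a \<and> a < b \<and> b < 1 then K a b else 0)" for a b
  have [measurable]: "case_prod K' \<in> borel_measurable (borel \<Otimes>\<^sub>M borel)"
    unfolding K'_def by measurable
  have "triangle_integral K = (\<integral>\<^sup>+a. \<integral>\<^sup>+x. K' a (a + x) \<partial>lborel \<partial>lborel)"
    unfolding triangle_integral_def K'_def[symmetric]
    using nn_integral_real_affine[where c=1 and f="K' a" and t=a for a] by simp
  also have "\<dots> = (\<integral>\<^sup>+w. \<integral>\<^sup>+x. K' (1 - w) (1 - w + x) \<partial>lborel \<partial>lborel)"
    using nn_integral_real_affine[where c="-1" and t=1 and f="\<lambda>a. \<integral>\<^sup>+x. K' a (a + x) \<partial>lborel"]
    by simp
  also have "\<dots> = (\<integral>\<^sup>+x. \<integral>\<^sup>+w. K' (1 - w) (1 - w + x) \<partial>lborel \<partial>lborel)"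
    by (rule lborel_pair.Fubini') measurable
  also have "\<dots> = triangle_integral (\<lambda>x w. K (1 - w) (1 - w + x))"
    unfolding triangle_integral_def K'_def by (intro nn_integral_cong) auto
  finally show ?thesis .
qed

lemma triangle_integral_reflect:
  assumes [measurable]: "case_prod K \<in> borel_measurable (borel \<Otimes>\<^sub>M borel)"
  shows "triangle_integral K = triangle_integral (\<lambda>x w. K (1 - w) (1 - x))"
proof -
  define K' where "K' a b = (if 0 < a \<and> a < b \<and> b < 1 then K a b else 0)" for a b
  have [measurable]: "case_prod K' \<in> borel_measurable (borel \<Otimes>\<^sub>M borel)"
    unfolding K'_def by measurable
  have "triangle_integral K = (\<integral>\<^sup>+b. \<integral>\<^sup>+a. K' a b \<partial>lborel \<partial>lborel)"
    unfolding triangle_integral_def K'_def[symmetric]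
    by (rule lborel_pair.Fubini'[symmetric]) measurable
  also have "\<dots> = (\<integral>\<^sup>+b. \<integral>\<^sup>+w. K' (1 - w) b \<partial>lborel \<partial>lborel)"
    using nn_integral_real_affine[where c="-1" and f="\<lambda>a. K' a b" and t=1 for b] by simp
  also have "\<dots> = (\<integral>\<^sup>+x. \<integral>\<^sup>+w. K' (1 - w) (1 - x) \<partial>lborel \<partial>lborel)"
    using nn_integral_real_affine[where c="-1" and t=1 and f="\<lambda>b. \<integral>\<^sup>+w. K' (1 - w) b \<partial>lborel"]
    by simp
  also have "\<dots> = triangle_integral (\<lambda>x w. K (1 - w) (1 - x))"
    unfolding triangle_integral_def K'_def by (intro nn_integral_cong) auto
  finally show ?thesis .
qed

lemma nn_integral_unif01_min_max:
  assumes [measurable]: "case_prod F \<in> borel_measurable (borel \<Otimes>\<^sub>M borel)"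
  shows "(\<integral>\<^sup>+x. \<integral>\<^sup>+y. F (min x y) (max x y) \<partial>unif01 \<partial>unif01) = 2 * triangle_integral F"
proof -
  interpret U: prob_space unif01 by (rule prob_space_unif01)
  define H where "H a b = (if 0 < a \<and> a < b \<and> b < 1 then F a b else 0)" for a b
  have [measurable]: "case_prod H \<in> borel_measurable (borel \<Otimes>\<^sub>M borel)"
    unfolding H_def by measurable
  have inner: "(\<integral>\<^sup>+y. F (min x y) (max x y) \<partial>unif01) = (\<integral>\<^sup>+y. H x y + H y x \<partial>lborel)"
    if x: "0 < x" "x < 1" for x
  proof -
    have "(\<integral>\<^sup>+y. F (min x y) (max x y) \<partial>unif01)
        = (\<integral>\<^sup>+y. F (min x y) (max x y) * indicator {0<..<1} y \<partial>lborel)"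
      by (rule nn_integral_unif01) measurable
    also have "\<dots> = (\<integral>\<^sup>+y. H x y + H y x \<partial>lborel)"
      using AE_lborel_singleton[of x]
      by (intro nn_integral_cong_AE, eventually_elim)
         (use x in \<open>auto simp: H_def indicator_def min_def max_def\<close>)
    finally show ?thesis .
  qed
  have "(\<integral>\<^sup>+x. \<integral>\<^sup>+y. F (min x y) (max x y) \<partial>unif01 \<partial>unif01)
      = (\<integral>\<^sup>+x. (\<integral>\<^sup>+y. F (min x y) (max x y) \<partial>unif01) * indicator {0<..<1} x \<partial>lborel)"
    by (rule nn_integral_unif01) measurable
  also have "\<dots> = (\<integral>\<^sup>+x. \<integral>\<^sup>+y. H x y + H y x \<partial>lborel \<partial>lborel)"
  proof -
    have "H x y + H y x = 0" if "\<not> (0 < x \<and> x < 1)" for x y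
      using that by (auto simp: H_def)
    then show ?thesis
      by (intro nn_integral_cong) (auto simp: inner indicator_def)
  qed
  also have "\<dots> = (\<integral>\<^sup>+x. \<integral>\<^sup>+y. H x y \<partial>lborel \<partial>lborel) + (\<integral>\<^sup>+x. \<integral>\<^sup>+y. H y x \<partial>lborel \<partial>lborel)"
    by (subst nn_integral_add[symmetric]; (intro nn_integral_cong nn_integral_add)?) measurable
  also have "(\<integral>\<^sup>+x. \<integral>\<^sup>+y. H y x \<partial>lborel \<partial>lborel) = (\<integral>\<^sup>+y. \<integral>\<^sup>+x. H y x \<partial>lborel \<partial>lborel)"
    by (rule lborel_pair.Fubini') measurable
  finally show ?thesis
    unfolding triangle_integral_def H_def[symmetric] by (simp add: mult_2)
qed

lemma nn_integral_XW_law: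
  assumes [measurable]: "f \<in> borel_measurable (borel \<Otimes>\<^sub>M borel)"
  shows "(\<integral>\<^sup>+q. f q \<partial>XW_law) = triangle_integral (\<lambda>x w. ennreal (6 * x) * f (x, w))"
proof -
  have "(\<integral>\<^sup>+q. f q \<partial>XW_law)
      = (\<integral>\<^sup>+q. ennreal (if 0 < fst q \<and> fst q < snd q \<and> snd q < 1 then 6 * fst q else 0) * f q
           \<partial>(lborel \<Otimes>\<^sub>M lborel))"
    unfolding XW_law_def by (subst nn_integral_density) (auto simp: case_prod_beta)
  also have "\<dots> = (\<integral>\<^sup>+x. \<integral>\<^sup>+w. ennreal (if 0 < x \<and> x < w \<and> w < 1 then 6 * x else 0) * f (x, w)
           \<partial>lborel \<partial>lborel)"
  proof -
    have "(\<lambda>q. ennreal (if 0 < fst q \<and> fst q < snd q \<and> snd q < 1 then 6 * fst q else 0) * f q)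
        \<in> borel_measurable (lborel \<Otimes>\<^sub>M lborel)"
      by measurable
    from lborel.nn_integral_fst[OF this, symmetric] show ?thesis
      by (simp only: fst_conv snd_conv)
  qed
  also have "\<dots> = triangle_integral (\<lambda>x w. ennreal (6 * x) * f (x, w))"
    unfolding triangle_integral_def by (intro nn_integral_cong) simp
  finally show ?thesis .
qed

definition piece_length :: "real \<Rightarrow> real \<Rightarrow> real \<Rightarrow> real" where
  "piece_length a b v =
     (if v < a then a else if a < v \<and> v < b then b - a else if b < v then 1 - b else 0)"

lemma nn_integral_unif01_piece_length:
  fixes f :: "real \<Rightarrow> ennreal"
  assumes "0 \<le> a" "a \<le> b" "b \<le> 1"
  shows "(\<integral>\<^sup>+v. f (piece_length a b v) \<partial>unif01)
       = ennreal a * f a + ennreal (b - a) * f (b - a) + ennreal (1 - b) * f (1 - b)"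
proof -
  have "(\<integral>\<^sup>+v. f (piece_length a b v) \<partial>unif01)
      = (\<integral>\<^sup>+v. f a * indicator {0<..<a} v + f (b - a) * indicator {a<..<b} v
               + f (1 - b) * indicator {b<..<1} v \<partial>lborel)"
  proof -
    have "(\<lambda>v. f (piece_length a b v)) \<in> borel_measurable borel"
      unfolding piece_length_def by (simp only: if_distrib[of f]) measurable
    moreover have "AE v in lborel. f (piece_length a b v) * indicator {0<..<1} v
        = f a * indicator {0<..<a} v + f (b - a) * indicator {a<..<b} v + f (1 - b) * indicator {b<..<1} v"
      using AE_lborel_singleton[of a] AE_lborel_singleton[of b]
      by eventually_elim (use assms in \<open>auto simp: piece_length_def indicator_def\<close>)
    ultimately show ?thesis
      by (simp add: nn_integral_unif01 cong: nn_integral_cong_AE)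
  qed
  also have "\<dots> = ennreal a * f a + ennreal (b - a) * f (b - a) + ennreal (1 - b) * f (1 - b)"
    using assms by (simp add: nn_integral_add nn_integral_cmult_indicator mult.commute)
  finally show ?thesis .
qed

lemma emeasure_distr_eq_nn_integral:
  assumes "f \<in> measurable M N" "A \<in> sets N"
  shows "emeasure (distr M N f) A = (\<integral>\<^sup>+x. indicator A (f x) \<partial>M)"
  using assms by (simp add: nn_integral_distr[symmetric])

definition affine_prob :: "real measure \<Rightarrow> real set \<Rightarrow> real \<Rightarrow> real \<Rightarrow> ennreal" where
  "affine_prob \<mu> A l g = (\<integral>\<^sup>+c. indicator A (l * c + g) \<partial>\<mu>)"

definition piece_average :: "real measure \<Rightarrow> real set \<Rightarrow> real \<Rightarrow> real \<Rightarrow> ennreal" where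
  "piece_average \<mu> A a b =
     ennreal a * affine_prob \<mu> A a (h1 a b) + ennreal (b - a) * affine_prob \<mu> A (b - a) (h1 a b)
     + ennreal (1 - b) * affine_prob \<mu> A (1 - b) (h1 a b)"

definition branch_mass :: "real measure \<Rightarrow> real set \<Rightarrow> (real \<Rightarrow> real \<Rightarrow> real) \<Rightarrow> ennreal" where
  "branch_mass \<mu> A h = triangle_integral (\<lambda>x w. ennreal x * affine_prob \<mu> A x (h x w))"

context
  fixes \<mu> :: "real measure" and A :: "real set"
  assumes prob: "prob_space \<mu>" and sets_\<mu>: "sets \<mu> = sets borel" and A [measurable]: "A \<in> sets borel"
begin

lemma measurable_ident_\<mu> [measurable]: "(\<lambda>c. c) \<in> borel_measurable \<mu>"
  using measurable_ident_sets[OF sets_\<mu>] by (simp add: id_def)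

lemma measurable_affine_prob [measurable (raw)]:
  assumes [measurable]: "l \<in> borel_measurable M" "g \<in> borel_measurable M"
  shows "(\<lambda>x. affine_prob \<mu> A (l x) (g x)) \<in> borel_measurable M"
proof -
  interpret prob_space \<mu> by (rule prob)
  show ?thesis
    unfolding affine_prob_def by measurable
qed

lemma measurable_T1 [measurable]:
  "T1 \<in> borel_measurable ((unif01 \<Otimes>\<^sub>M unif01 \<Otimes>\<^sub>M unif01) \<Otimes>\<^sub>M (\<mu> \<Otimes>\<^sub>M \<mu> \<Otimes>\<^sub>M \<mu>))"
proof -
  have T1_eq: "T1 = (\<lambda>((u1, u2, v), c1, c2, c3).
      (if v < min u1 u2 then min u1 u2 * c1 else 0)
      + (if min u1 u2 < v \<and> v < max u1 u2 then (max u1 u2 - min u1 u2) * c2 else 0)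
      + (if max u1 u2 < v then (1 - max u1 u2) * c3 else 0)
      + h1 (min u1 u2) (max u1 u2))"
    by (auto simp: fun_eq_iff T1_def Let_def indicator_def h1_def)
  show ?thesis
    unfolding T1_eq case_prod_beta h1_def by measurable
qed

lemma measurable_T2 [measurable]: "T2 \<in> borel_measurable ((XW_law \<Otimes>\<^sub>M J_law) \<Otimes>\<^sub>M \<mu>)"
proof -
  have T2_eq: "T2 = (\<lambda>z. fst (fst (fst z)) * snd z + hJ (snd (fst z)) (fst (fst (fst z))) (snd (fst (fst z))))"
    by (auto simp: T2_def)
  show ?thesis
    unfolding T2_eq hJ_def h1_def h2_def h3_def XW_law_def J_law_def by measurable
qed

lemma nn_integral_unif01_piece_average:
  assumes "0 < u1" "u1 < 1" "0 < u2" "u2 < 1"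
  shows "(\<integral>\<^sup>+v. affine_prob \<mu> A (piece_length (min u1 u2) (max u1 u2) v) (h1 (min u1 u2) (max u1 u2))
           \<partial>unif01) = piece_average \<mu> A (min u1 u2) (max u1 u2)"
  unfolding piece_average_def using assms
  by (subst nn_integral_unif01_piece_length) auto

lemma triangle_integral_piece_average:
  "triangle_integral (piece_average \<mu> A) = branch_mass \<mu> A h1 + branch_mass \<mu> A h2 + branch_mass \<mu> A h3"
proof -
  have "triangle_integral (piece_average \<mu> A)
      = triangle_integral (\<lambda>a b. ennreal a * affine_prob \<mu> A a (h1 a b))
        + triangle_integral (\<lambda>a b. ennreal (b - a) * affine_prob \<mu> A (b - a) (h1 a b))
        + triangle_integral (\<lambda>a b. ennreal (1 - b) * affine_prob \<mu> A (1 - b) (h1 a b))"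
    unfolding piece_average_def h1_def
    by (subst triangle_integral_add; (subst triangle_integral_add)?; measurable)
  also have "triangle_integral (\<lambda>a b. ennreal (b - a) * affine_prob \<mu> A (b - a) (h1 a b))
      = branch_mass \<mu> A h2"
    unfolding branch_mass_def
    by (subst triangle_integral_shear) (simp_all add: h1_def h2_def algebra_simps)
  also have "triangle_integral (\<lambda>a b. ennreal (1 - b) * affine_prob \<mu> A (1 - b) (h1 a b))
      = branch_mass \<mu> A h3"
    unfolding branch_mass_def
    by (subst triangle_integral_reflect) (simp_all add: h1_def h3_def algebra_simps)
  finally show ?thesis
    by (simp add: branch_mass_def)
qed

lemma nn_integral_T1_copies:
  "(\<integral>\<^sup>+c. indicator A (T1 ((u1, u2, v), c)) \<partial>(\<mu> \<Otimes>\<^sub>M \<mu> \<Otimes>\<^sub>M \<mu>))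
     = affine_prob \<mu> A (piece_length (min u1 u2) (max u1 u2) v) (h1 (min u1 u2) (max u1 u2))"
proof -
  interpret prob_space \<mu> by (rule prob)
  interpret \<mu>2: prob_space "\<mu> \<Otimes>\<^sub>M \<mu>" by (intro prob_space_pair prob)
  have sf: "sigma_finite_measure \<mu>" "sigma_finite_measure (\<mu> \<Otimes>\<^sub>M \<mu>)"
    by (simp_all add: prob_space_imp_sigma_finite \<mu>2.prob_space_axioms prob)
  define a b where "a = min u1 u2" and "b = max u1 u2"
  define l g where "l = piece_length a b v" and "g = h1 a b"
  have int_fst: "(\<integral>\<^sup>+c. indicator A (l * fst c + g) \<partial>(\<mu> \<Otimes>\<^sub>M (\<mu> \<Otimes>\<^sub>M \<mu>))) = affine_prob \<mu> A l g"
    unfolding affine_prob_def by (rule \<mu>2.nn_integral_fst_factor) measurable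
  have int_fst_snd:
    "(\<integral>\<^sup>+c. indicator A (l * fst (snd c) + g) \<partial>(\<mu> \<Otimes>\<^sub>M (\<mu> \<Otimes>\<^sub>M \<mu>))) = affine_prob \<mu> A l g"
    unfolding affine_prob_def
    using nn_integral_snd_factor[OF sf(2), of "\<lambda>d. indicator A (l * fst d + g)"]
      nn_integral_fst_factor[of "\<lambda>c. indicator A (l * c + g)"]
    by simp
  have int_snd_snd:
    "(\<integral>\<^sup>+c. indicator A (l * snd (snd c) + g) \<partial>(\<mu> \<Otimes>\<^sub>M (\<mu> \<Otimes>\<^sub>M \<mu>))) = affine_prob \<mu> A l g"
    unfolding affine_prob_def
    using nn_integral_snd_factor[OF sf(2), of "\<lambda>d. indicator A (l * snd d + g)"]
      nn_integral_snd_factor[OF sf(1), of "\<lambda>c. indicator A (l * c + g)"]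
    by simp
  \<comment> \<open>the last case includes the ties \<open>v = a\<close>, \<open>v = b\<close>, where \<open>l = 0\<close>\<close>
  consider (middle) "a < v" "v < b" | (right) "b < v" | (left) "\<not> (a < v \<and> v < b)" "\<not> b < v"
    by blast
  then show ?thesis
  proof cases
    case middle
    then have "T1 ((u1, u2, v), c) = l * fst (snd c) + g" for c
      by (cases c) (auto simp: T1_def Let_def piece_length_def h1_def a_def b_def l_def g_def)
    with int_fst_snd show ?thesis
      by (simp add: a_def b_def l_def g_def)
  next
    case right
    then have "T1 ((u1, u2, v), c) = l * snd (snd c) + g" for c
      by (cases c) (auto simp: T1_def Let_def piece_length_def h1_def a_def b_def l_def g_def)
    with int_snd_snd show ?thesis
      by (simp add: a_def b_def l_def g_def)
  next
    case left
    then have "T1 ((u1, u2, v), c) = l * fst c + g" for c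
      by (cases c) (auto simp: T1_def Let_def piece_length_def h1_def a_def b_def l_def g_def)
    with int_fst show ?thesis
      by (simp add: a_def b_def l_def g_def)
  qed
qed

lemma emeasure_T2_law:
  "emeasure (distr ((XW_law \<Otimes>\<^sub>M J_law) \<Otimes>\<^sub>M \<mu>) borel T2) A
     = 2 * (branch_mass \<mu> A h1 + branch_mass \<mu> A h2 + branch_mass \<mu> A h3)"
proof -
  interpret prob_space \<mu> by (rule prob)
  interpret J: prob_space J_law by (rule prob_space_J_law)
  let ?M = "(XW_law \<Otimes>\<^sub>M J_law) \<Otimes>\<^sub>M \<mu>"
  let ?\<psi> = "\<lambda>j x w. affine_prob \<mu> A x (hJ j x w)"
  have [measurable]: "(\<lambda>(x, w). ?\<psi> j x w) \<in> borel_measurable (borel \<Otimes>\<^sub>M borel)" for j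
    unfolding hJ_def h1_def h2_def h3_def by measurable
  have "emeasure (distr ?M borel T2) A = (\<integral>\<^sup>+z. indicator A (T2 z) \<partial>?M)"
    by (rule emeasure_distr_eq_nn_integral) measurable
  also have "\<dots> = (\<integral>\<^sup>+p. \<integral>\<^sup>+c. indicator A (T2 (p, c)) \<partial>\<mu> \<partial>(XW_law \<Otimes>\<^sub>M J_law))"
    by (rule nn_integral_fst[symmetric]) measurable
  also have "\<dots> = (\<integral>\<^sup>+p. ?\<psi> (snd p) (fst (fst p)) (snd (fst p)) \<partial>(XW_law \<Otimes>\<^sub>M J_law))"
    by (intro nn_integral_cong) (auto simp: T2_def affine_prob_def split: prod.splits)
  also have "\<dots> = (\<integral>\<^sup>+q. \<integral>\<^sup>+j. ?\<psi> j (fst q) (snd q) \<partial>J_law \<partial>XW_law)"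
    by (rule J.nn_integral_fst[of "\<lambda>p. ?\<psi> (snd p) (fst (fst p)) (snd (fst p))", symmetric, simplified])
       (unfold hJ_def h1_def h2_def h3_def XW_law_def J_law_def, measurable)
  also have "\<dots> = (\<integral>\<^sup>+q. (?\<psi> 1 (fst q) (snd q) + ?\<psi> 2 (fst q) (snd q) + ?\<psi> 3 (fst q) (snd q)) / 3 \<partial>XW_law)"
    by (simp add: nn_integral_J_law)
  also have "\<dots> = triangle_integral (\<lambda>x w. ennreal (6 * x) * ((?\<psi> 1 x w + ?\<psi> 2 x w + ?\<psi> 3 x w) / 3))"
    by (subst nn_integral_XW_law) (simp, measurable)
  also have "\<dots> = triangle_integral (\<lambda>x w. 2 * (ennreal x * affine_prob \<mu> A x (h1 x w)
      + ennreal x * affine_prob \<mu> A x (h2 x w) + ennreal x * affine_prob \<mu> A x (h3 x w)))"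
    by (rule triangle_integral_cong) (simp add: ennreal_six_mult_third distrib_left hJ_def)
  also have "\<dots> = 2 * triangle_integral (\<lambda>x w. ennreal x * affine_prob \<mu> A x (h1 x w)
      + ennreal x * affine_prob \<mu> A x (h2 x w) + ennreal x * affine_prob \<mu> A x (h3 x w))"
    by (rule triangle_integral_cmult) (unfold h1_def h2_def h3_def, measurable)
  also have "\<dots> = 2 * (branch_mass \<mu> A h1 + branch_mass \<mu> A h2 + branch_mass \<mu> A h3)"
    unfolding branch_mass_def
    by (subst triangle_integral_add; (subst triangle_integral_add)?; unfold h1_def h2_def h3_def; measurable)
  finally show ?thesis .
qed

lemma emeasure_T1_law:
  "emeasure (distr ((unif01 \<Otimes>\<^sub>M unif01 \<Otimes>\<^sub>M unif01) \<Otimes>\<^sub>M (\<mu> \<Otimes>\<^sub>M \<mu> \<Otimes>\<^sub>M \<mu>)) borel T1) A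
     = 2 * (branch_mass \<mu> A h1 + branch_mass \<mu> A h2 + branch_mass \<mu> A h3)"
proof -
  interpret U: prob_space unif01 by (rule prob_space_unif01)
  interpret U2: prob_space "unif01 \<Otimes>\<^sub>M unif01" by (intro prob_space_pair prob_space_unif01)
  interpret C: prob_space "\<mu> \<Otimes>\<^sub>M \<mu> \<Otimes>\<^sub>M \<mu>" by (intro prob_space_pair prob)
  let ?U3 = "unif01 \<Otimes>\<^sub>M unif01 \<Otimes>\<^sub>M unif01"
  let ?M = "?U3 \<Otimes>\<^sub>M (\<mu> \<Otimes>\<^sub>M \<mu> \<Otimes>\<^sub>M \<mu>)"
  define \<Phi> where "\<Phi> u1 u2 v =
    affine_prob \<mu> A (piece_length (min u1 u2) (max u1 u2) v) (h1 (min u1 u2) (max u1 u2))" for u1 u2 v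
  have \<Phi>_measurable [measurable]: "(\<lambda>u. \<Phi> (f u) (g u) (k u)) \<in> borel_measurable N"
    if [measurable]: "f \<in> borel_measurable N" "g \<in> borel_measurable N" "k \<in> borel_measurable N"
    for N and f g k :: "_ \<Rightarrow> real"
    unfolding \<Phi>_def piece_length_def h1_def by measurable
  have "emeasure (distr ?M borel T1) A = (\<integral>\<^sup>+z. indicator A (T1 z) \<partial>?M)"
    by (rule emeasure_distr_eq_nn_integral) measurable
  also have "\<dots> = (\<integral>\<^sup>+u. \<integral>\<^sup>+c. indicator A (T1 (u, c)) \<partial>(\<mu> \<Otimes>\<^sub>M \<mu> \<Otimes>\<^sub>M \<mu>) \<partial>?U3)"
    by (rule C.nn_integral_fst[symmetric]) measurable
  also have "\<dots> = (\<integral>\<^sup>+u. \<Phi> (fst u) (fst (snd u)) (snd (snd u)) \<partial>?U3)"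
  proof -
    have "(\<integral>\<^sup>+c. indicator A (T1 (u, c)) \<partial>(\<mu> \<Otimes>\<^sub>M \<mu> \<Otimes>\<^sub>M \<mu>)) = \<Phi> (fst u) (fst (snd u)) (snd (snd u))" for u
      using nn_integral_T1_copies[of "fst u" "fst (snd u)" "snd (snd u)"] by (simp add: \<Phi>_def)
    then show ?thesis
      by simp
  qed
  also have "\<dots> = (\<integral>\<^sup>+u1. \<integral>\<^sup>+u2. \<integral>\<^sup>+v. \<Phi> u1 u2 v \<partial>unif01 \<partial>unif01 \<partial>unif01)"
    using U2.nn_integral_fst[of "\<lambda>u. \<Phi> (fst u) (fst (snd u)) (snd (snd u))"]
      U.nn_integral_fst[of "\<lambda>p. \<Phi> _ (fst p) (snd p)"]
    by simp
  also have "\<dots> = (\<integral>\<^sup>+u1. \<integral>\<^sup>+u2. piece_average \<mu> A (min u1 u2) (max u1 u2) \<partial>unif01 \<partial>unif01)"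
  proof -
    have "AE u1 in unif01. (\<integral>\<^sup>+u2. \<integral>\<^sup>+v. \<Phi> u1 u2 v \<partial>unif01 \<partial>unif01)
        = (\<integral>\<^sup>+u2. piece_average \<mu> A (min u1 u2) (max u1 u2) \<partial>unif01)"
      using AE_unif01
    proof eventually_elim
      case (elim u1)
      from AE_unif01 have "AE u2 in unif01.
          (\<integral>\<^sup>+v. \<Phi> u1 u2 v \<partial>unif01) = piece_average \<mu> A (min u1 u2) (max u1 u2)"
        by eventually_elim (use elim in \<open>simp add: \<Phi>_def nn_integral_unif01_piece_average\<close>)
      then show ?case
        by (rule nn_integral_cong_AE)
    qed
    then show ?thesis
      by (rule nn_integral_cong_AE)
  qed
  also have "\<dots> = 2 * triangle_integral (piece_average \<mu> A)"
    by (rule nn_integral_unif01_min_max) (unfold piece_average_def h1_def, measurable)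
  finally show ?thesis
    by (simp only: triangle_integral_piece_average)
qed

end

theorem lemma9p1:
  fixes \<mu> :: "real measure"
  assumes "prob_space \<mu>"
    and "sets \<mu> = sets borel"
    and "\<mu> = distr ((unif01 \<Otimes>\<^sub>M unif01 \<Otimes>\<^sub>M unif01) \<Otimes>\<^sub>M (\<mu> \<Otimes>\<^sub>M \<mu> \<Otimes>\<^sub>M \<mu>)) borel T1"
  shows "\<mu> = distr ((XW_law \<Otimes>\<^sub>M J_law) \<Otimes>\<^sub>M \<mu>) borel T2"
proof (rule measure_eqI)
  show "sets \<mu> = sets (distr ((XW_law \<Otimes>\<^sub>M J_law) \<Otimes>\<^sub>M \<mu>) borel T2)"
    using assms(2) by simp
next
  fix A
  assume "A \<in> sets \<mu>"
  then have A: "A \<in> sets borel"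
    using assms(2) by simp
  have "emeasure \<mu> A
      = emeasure (distr ((unif01 \<Otimes>\<^sub>M unif01 \<Otimes>\<^sub>M unif01) \<Otimes>\<^sub>M (\<mu> \<Otimes>\<^sub>M \<mu> \<Otimes>\<^sub>M \<mu>)) borel T1) A"
    using arg_cong[OF assms(3), of "\<lambda>M. emeasure M A"] .
  also have "\<dots> = 2 * (branch_mass \<mu> A h1 + branch_mass \<mu> A h2 + branch_mass \<mu> A h3)"
    by (rule emeasure_T1_law[OF assms(1,2) A])
  also have "\<dots> = emeasure (distr ((XW_law \<Otimes>\<^sub>M J_law) \<Otimes>\<^sub>M \<mu>) borel T2) A"
    by (rule emeasure_T2_law[OF assms(1,2) A, symmetric])
  finally show "emeasure \<mu> A = emeasure (distr ((XW_law \<Otimes>\<^sub>M J_law) \<Otimes>\<^sub>M \<mu>) borel T2) A" .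
qed

end
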